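(* Let $k\ge0$ be an integer and let $\alpha,\beta,v$ be real with $\alpha>-(k+1)$, $\beta>-(k+1)$ and $|\alpha-\beta|<|v|<\alpha+\beta+2(k+1)$. Then $W^{(k)}=W^{(\alpha+k,\beta+k,v)}$ is an irreducible weight matrix on $(0,1)$, and the differential operator $D^{(k)}$ is symmetric with respect to $W^{(k)}$.
   Context: For real parameters $a,b,v$ write $\kappa'_{\pm v,\pm b}=a\pm v\pm b$ and define $$W^{(a,b,v)}(t)=t^a(1-t)^b\begin{pmatrix}\frac{v(\kappa'_{v,b}+2)}{\kappa'_{v,-b}}t^2-(\kappa'_{v,b}+2)t+(a+1) & (a+b+2)t-(a+1)\\ (a+b+2)t-(a+1) & -\frac{v(\kappa'_{-v,b}+2)}{\kappa'_{-v,-b}}t^2-(\kappa'_{-v,b}+2)t+(a+1)\end{pmatrix},\quad t\in(0,1).$$ Put $W^{(k)}=W^{(\alpha+k,\beta+k,v)}$. With $\kappa_{\pm v,\pm\beta}=\alpha\pm v\pm\beta$, let $C=\begin{pmatrix}\alpha+1-\frac{\kappa_{-v,-\beta}}{v}&\frac{\kappa_{v,-\beta}}{v}\\-\frac{\kappa_{-v,-\beta}}{v}&\alpha+1+\frac{\kappa_{v,-\beta}}{v}\end{pmatrix}$, $V=\mathrm{diag}(v,0)$, $C^{(k)}=C+kI$, $U^{(k)}=(\alpha+\beta+4+2k)I$, and let $D^{(k)}$ be the right-acting operator $PD^{(k)}=P''(t)\,t(1-t)+P'(t)\big((C^{(k)})^*-tU^{(k)}\big)-P(t)V$. A weight matrix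 is a $2\times2$ matrix function positive definite a.e. on $(0,1)$ with finite moments. It is irreducible if there is no constant non-singular $M$ with $MW(t)M^*$ diagonal for all $t$. An operator $D$ is symmetric w.r.t. $W$ if $\langle PD,Q\rangle=\langle P,QD\rangle$ for all $2\times2$ matrix polynomials $P,Q$, where $\langle P,Q\rangle=\int_0^1P W Q^*dt$. *)

theory Defs
  imports "HOL-Analysis.Analysis"
begin

text \<open>2x2 matrices are rendered as complex^2^2 (indices 1, 2 of the numeral type 2).
  Matrix product is (**), conjugate transpose is mstar.\<close>

definition mat2 :: "'a::zero \<Rightarrow> 'a \<Rightarrow> 'a \<Rightarrow> 'a \<Rightarrow> 'a^2^2" where
  "mat2 a b c d = vector [vector [a, b], vector [c, d]]"

definition mstar :: "complex^2^2 \<Rightarrow> complex^2^2" where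
  "mstar M = (\<chi> i j. cnj (M $ j $ i))"

definition cmat :: "real^2^2 \<Rightarrow> complex^2^2" where
  "cmat A = (\<chi> i j. complex_of_real (A $ i $ j))"

definition pos_def :: "complex^2^2 \<Rightarrow> bool" where
  "pos_def M \<longleftrightarrow> mstar M = M \<and>
     (\<forall>x::complex^2. x \<noteq> 0 \<longrightarrow> 0 < Re (\<Sum>i\<in>UNIV. cnj (x $ i) * (M *v x) $ i))"

definition weight_matrix :: "(real \<Rightarrow> complex^2^2) \<Rightarrow> bool" where
  "weight_matrix W \<longleftrightarrow>
     (AE t in lebesgue. t \<in> {0<..<1} \<longrightarrow> pos_def (W t)) \<and>
     (\<forall>n::nat. (\<lambda>t. (t ^ n) *\<^sub>R W t) absolutely_integrable_on {0<..<1})"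

definition is_diag :: "complex^2^2 \<Rightarrow> bool" where
  "is_diag A \<longleftrightarrow> (\<forall>i j. i \<noteq> j \<longrightarrow> A $ i $ j = 0)"

definition irreducible_weight :: "(real \<Rightarrow> complex^2^2) \<Rightarrow> bool" where
  "irreducible_weight W \<longleftrightarrow>
     \<not> (\<exists>M::complex^2^2. invertible M \<and> (\<forall>t\<in>{0<..<1}. is_diag (M ** W t ** mstar M)))"

definition matpoly :: "(real \<Rightarrow> complex^2^2) \<Rightarrow> bool" where
  "matpoly P \<longleftrightarrow> (\<exists>(c::nat \<Rightarrow> complex^2^2) n. \<forall>t. P t = (\<Sum>i\<le>n. (t ^ i) *\<^sub>R c i))"

definition mip :: "(real \<Rightarrow> complex^2^2) \<Rightarrow> (real \<Rightarrow> complex^2^2) \<Rightarrow> (real \<Rightarrow> complex^2^2) \<Rightarrow> complex^2^2" where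
  "mip W P Q = integral {0<..<1} (\<lambda>t. P t ** W t ** mstar (Q t))"

definition symmetric_op :: "((real \<Rightarrow> complex^2^2) \<Rightarrow> (real \<Rightarrow> complex^2^2)) \<Rightarrow> (real \<Rightarrow> complex^2^2) \<Rightarrow> bool" where
  "symmetric_op D W \<longleftrightarrow> (\<forall>P Q. matpoly P \<longrightarrow> matpoly Q \<longrightarrow> mip W (D P) Q = mip W P (D Q))"

definition Wabv :: "real \<Rightarrow> real \<Rightarrow> real \<Rightarrow> real \<Rightarrow> complex^2^2" where
  "Wabv a b v t = cmat ((t powr a * (1 - t) powr b) *\<^sub>R mat2
     (v * ((a + v + b) + 2) / (a + v - b) * t^2 - ((a + v + b) + 2) * t + (a + 1))
     ((a + b + 2) * t - (a + 1))
     ((a + b + 2) * t - (a + 1))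
     (- v * ((a - v + b) + 2) / (a - v - b) * t^2 - ((a - v + b) + 2) * t + (a + 1)))"

definition Wk :: "real \<Rightarrow> real \<Rightarrow> real \<Rightarrow> nat \<Rightarrow> real \<Rightarrow> complex^2^2" where
  "Wk \<alpha> \<beta> v k = Wabv (\<alpha> + real k) (\<beta> + real k) v"

definition Cmat :: "real \<Rightarrow> real \<Rightarrow> real \<Rightarrow> real^2^2" where
  "Cmat \<alpha> \<beta> v = mat2
     (\<alpha> + 1 - (\<alpha> - v - \<beta>) / v) ((\<alpha> + v - \<beta>) / v)
     (- (\<alpha> - v - \<beta>) / v) (\<alpha> + 1 + (\<alpha> + v - \<beta>) / v)"

definition Vmat :: "real \<Rightarrow> real^2^2" where
  "Vmat v = mat2 v 0 0 0"

definition Ck :: "real \<Rightarrow> real \<Rightarrow> real \<Rightarrow> nat \<Rightarrow> real^2^2" where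
  "Ck \<alpha> \<beta> v k = Cmat \<alpha> \<beta> v + real k *\<^sub>R mat 1"

definition Uk :: "real \<Rightarrow> real \<Rightarrow> nat \<Rightarrow> real^2^2" where
  "Uk \<alpha> \<beta> k = (\<alpha> + \<beta> + 4 + 2 * real k) *\<^sub>R mat 1"

definition Dk :: "real \<Rightarrow> real \<Rightarrow> real \<Rightarrow> nat \<Rightarrow> (real \<Rightarrow> complex^2^2) \<Rightarrow> (real \<Rightarrow> complex^2^2)" where
  "Dk \<alpha> \<beta> v k P = (\<lambda>t.
     let P1 = (\<lambda>s. vector_derivative P (at s));
         P2 = (\<lambda>s. vector_derivative P1 (at s))
     in (t * (1 - t)) *\<^sub>R P2 t
        + P1 t ** (mstar (cmat (Ck \<alpha> \<beta> v k)) - t *\<^sub>R cmat (Uk \<alpha> \<beta> k))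
        - P t ** cmat (Vmat v))"

end

theory Submission
  imports Defs
begin

(* Write W = \<omega> R with \<omega>(t) = t^a (1-t)^b and R = W0 + t W1 + t^2 W2 real symmetric.
   The (1,1) entry of R has negative discriminant and det R = c1 c2 t^2 (1-t)^2, where
   c1, c2 > 0 are the leading diagonal coefficients, so W is positive definite on (0,1);
   its moments are Beta integrals. If M W M^* were diagonal, the off-diagonal entry would
   be \<omega> times a quadratic in t vanishing on (0,1); its constant and linear coefficients
   force two entries of M to coincide, contradicting det M \<noteq> 0.

   For symmetry let \<phi> = t(1-t) and \<psi> = (a+1)(1-t) - (b+1)t, so that (\<phi> \<omega>)' = \<psi> \<omega>.
   With F = C^* - t U and the antisymmetric S = [[0,v],[-v,0]], R satisfies
     F R = \<psi> R + \<phi> R' + \<phi> S,   R F^* = \<psi> R + \<phi> R' - \<phi> S,   V R = R V - \<psi> S.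
   These make (P D) W Q^* - P W (Q D)^* the derivative of \<phi> \<omega> K, where
   K = P' R Q^* - P R Q'^* + P S Q^* is continuous on [0,1] and \<phi> \<omega> vanishes at 0 and 1. *)

section \<open>2x2 matrices\<close>

lemma mat2_nth [simp]:
  "mat2 a b c d $ 1 $ 1 = a" "mat2 a b c d $ 1 $ 2 = b"
  "mat2 a b c d $ 2 $ 1 = c" "mat2 a b c d $ 2 $ 2 = d"
  by (simp_all add: mat2_def)

lemma cmat_nth [simp]: "cmat A $ i $ j = complex_of_real (A $ i $ j)"
  by (simp add: cmat_def)

lemma mstar_nth [simp]: "mstar A $ i $ j = cnj (A $ j $ i)"
  by (simp add: mstar_def)

lemma matrix22_eq_iff:
  "(A::'a^2^2) = B \<longleftrightarrow>
    A$1$1 = B$1$1 \<and> A$1$2 = B$1$2 \<and> A$2$1 = B$2$1 \<and> A$2$2 = B$2$2"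
  by (auto simp: vec_eq_iff forall_2)

lemma matrix22_mult_nth [simp]:
  "((A::'a::semiring_1^2^2) ** B) $ i $ j = A$i$1 * B$1$j + A$i$2 * B$2$j"
  by (simp add: matrix_matrix_mult_def sum_2)

lemma mat1_nth [simp]:
  "(mat 1 :: 'a::zero_neq_one^2^2) $ 1 $ 1 = 1" "(mat 1 :: 'a::zero_neq_one^2^2) $ 2 $ 2 = 1"
  "(mat 1 :: 'a::zero_neq_one^2^2) $ 1 $ 2 = 0" "(mat 1 :: 'a::zero_neq_one^2^2) $ 2 $ 1 = 0"
  by (simp_all add: mat_def)

lemma matrix_add_rdistrib: "((A::'a::semiring_1^'n^'m) + B) ** C = A ** C + B ** C"
  by (vector matrix_matrix_mult_def sum.distrib[symmetric] field_simps)

lemma matrix_diff_rdistrib: "((A::'a::ring_1^'n^'m) - B) ** C = A ** C - B ** C"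
  by (vector matrix_matrix_mult_def sum_subtractf[symmetric] field_simps)

lemma matrix_diff_ldistrib: "(A::'a::ring_1^'n^'m) ** (B - C) = A ** B - A ** C"
  by (vector matrix_matrix_mult_def sum_subtractf[symmetric] field_simps)

lemma cmat_add: "cmat (A + B) = cmat A + cmat B"
  by (simp add: matrix22_eq_iff)

lemma cmat_diff: "cmat (A - B) = cmat A - cmat B"
  by (simp add: matrix22_eq_iff)

lemma cmat_scaleR: "cmat (c *\<^sub>R A) = c *\<^sub>R cmat A"
  by (simp add: matrix22_eq_iff) (simp add: scaleR_conv_of_real)

lemma cmat_mult: "cmat (A ** B) = cmat A ** cmat B"
  by (simp add: matrix22_eq_iff)

lemma mstar_cmat: "mstar (cmat A) = cmat (transpose A)"
  by (simp add: matrix22_eq_iff transpose_def)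

lemma mstar_add: "mstar (A + B) = mstar A + mstar B"
  by (simp add: matrix22_eq_iff)

lemma mstar_diff: "mstar (A - B) = mstar A - mstar B"
  by (simp add: matrix22_eq_iff)

lemma mstar_scaleR: "mstar (c *\<^sub>R A) = c *\<^sub>R mstar A"
  by (simp add: matrix22_eq_iff)

lemma mstar_mult: "mstar (A ** B) = mstar B ** mstar A"
  by (simp add: matrix22_eq_iff algebra_simps)

section \<open>Positive definiteness, Beta moments, matrix-valued calculus\<close>

lemma quadratic_form_pos:
  fixes p q r y1 y2 :: real
  assumes "p > 0" "p * r - q\<^sup>2 > 0" "y1 \<noteq> 0 \<or> y2 \<noteq> 0"
  shows "p * y1\<^sup>2 + 2 * q * y1 * y2 + r * y2\<^sup>2 > 0"
proof -
  have "p * (p * y1\<^sup>2 + 2 * q * y1 * y2 + r * y2\<^sup>2)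
      = (p*y1 + q*y2)\<^sup>2 + (p*r - q\<^sup>2) * y2\<^sup>2"
    by (simp add: algebra_simps power2_eq_square)
  moreover have "(p*y1 + q*y2)\<^sup>2 + (p*r - q\<^sup>2) * y2\<^sup>2 > 0"
    using assms by (cases "y2 = 0") (auto intro: add_nonneg_pos)
  ultimately show ?thesis
    using assms(1) by (metis zero_less_mult_pos)
qed

lemma pos_def_cmat:
  fixes A :: "real^2^2"
  assumes "A$1$2 = A$2$1" "A$1$1 > 0" "A$1$1 * A$2$2 - (A$1$2)\<^sup>2 > 0"
  shows "pos_def (cmat A)"
  unfolding pos_def_def
proof (intro conjI allI impI)
  show "mstar (cmat A) = cmat A"
    using assms by (simp add: matrix22_eq_iff)
  fix x :: "complex^2"
  assume "x \<noteq> 0"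
  define F where "F y1 y2 = A$1$1 * y1\<^sup>2 + 2 * A$1$2 * y1 * y2 + A$2$2 * y2\<^sup>2" for y1 y2
  have F_pos: "F y1 y2 > 0" if "y1 \<noteq> 0 \<or> y2 \<noteq> 0" for y1 y2
    using quadratic_form_pos[OF assms(2,3) that] by (simp add: F_def)
  have F_nonneg: "F y1 y2 \<ge> 0" for y1 y2
    using F_pos[of y1 y2] by (cases "y1 = 0 \<and> y2 = 0") (auto simp: F_def)
  have "Re (x$1) \<noteq> 0 \<or> Re (x$2) \<noteq> 0 \<or> Im (x$1) \<noteq> 0 \<or> Im (x$2) \<noteq> 0"
    using \<open>x \<noteq> 0\<close> by (auto simp: vec_eq_iff forall_2 complex_eq_iff)
  then have "F (Re (x$1)) (Re (x$2)) + F (Im (x$1)) (Im (x$2)) > 0"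
    using F_pos F_nonneg by (meson add_nonneg_pos add_pos_nonneg)
  moreover have "Re (\<Sum>i\<in>UNIV. cnj (x $ i) * (cmat A *v x) $ i)
      = F (Re (x$1)) (Re (x$2)) + F (Im (x$1)) (Im (x$2))"
    using assms(1) by (simp add: F_def sum_2 matrix_vector_mult_def algebra_simps power2_eq_square)
  ultimately show "0 < Re (\<Sum>i\<in>UNIV. cnj (x $ i) * (cmat A *v x) $ i)"
    by simp
qed

lemma quadratic_eq_0_on_unit_interval:
  fixes f0 f1 f2 :: complex
  assumes "\<And>t::real. 0 < t \<Longrightarrow> t < 1 \<Longrightarrow> f0 + of_real t * f1 + of_real (t\<^sup>2) * f2 = 0"
  shows "f0 = 0" "f1 = 0" "f2 = 0"
proof -
  have e1: "f0 + f1/4 + f2/16 = 0" using assms[of "1/4"] by (simp add: power2_eq_square)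
  have e2: "f0 + f1/2 + f2/4 = 0" using assms[of "1/2"] by (simp add: power2_eq_square)
  have e3: "f0 + 3*f1/4 + 9*f2/16 = 0" using assms[of "3/4"] by (simp add: power2_eq_square)
  have "f2/8 = (f0 + 3*f1/4 + 9*f2/16) - 2*(f0 + f1/2 + f2/4) + (f0 + f1/4 + f2/16)"
    by (simp add: algebra_simps)
  then show "f2 = 0" using e1 e2 e3 by simp
  have "f1 = 4 * ((f0 + f1/2 + f2/4) - (f0 + f1/4 + f2/16)) - 3*f2/4"
    by (simp add: field_simps)
  also have "\<dots> = 0"
    unfolding e1 e2 using \<open>f2 = 0\<close> by simp
  finally show "f1 = 0" .
  with \<open>f2 = 0\<close> show "f0 = 0" using e1 by simp
qed

lemma beta_moment_absolutely_integrable: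
  fixes a b :: real
  assumes "a > -1" "b > -1"
  shows "(\<lambda>t. t^n * (t powr a * (1-t) powr b)) absolutely_integrable_on {0<..<1}"
proof (rule nonnegative_absolutely_integrable_1)
  have "((\<lambda>t. t powr ((a+n+1) - 1) * (1 - t) powr ((b+1) - 1))
      has_integral Beta (a+n+1) (b+1)) {0<..<1}"
    using has_integral_Beta_real[of "a+n+1" "b+1"] assms by (simp add: has_integral_Icc_iff_Ioo)
  then show "(\<lambda>t. t^n * (t powr a * (1-t) powr b)) integrable_on {0<..<1}"
    by (rule has_integral_integrable[THEN integrable_eq]) (simp add: powr_add powr_realpow)
qed simp

lemma integral_eq_if_has_integral_diff_0:
  fixes f g :: "'a::euclidean_space \<Rightarrow> 'b::banach"
  assumes "((\<lambda>x. f x - g x) has_integral 0) S"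
  shows "integral S f = integral S g"
proof (cases "f integrable_on S")
  case True
  have "(\<lambda>x. f x - (f x - g x)) integrable_on S"
    using True has_integral_integrable[OF assms] by (rule integrable_diff)
  then have "g integrable_on S" by simp
  then have "integral S f - integral S g = integral S (\<lambda>x. f x - g x)"
    using True by (simp add: integral_diff)
  also have "\<dots> = 0"
    using assms by (rule integral_unique)
  finally show ?thesis by simp
next
  case False
  have "\<not> g integrable_on S"
  proof
    assume "g integrable_on S"
    then have "(\<lambda>x. g x + (f x - g x)) integrable_on S"
      using has_integral_integrable[OF assms] by (rule integrable_add)
    with False show False by simp
  qed
  with False show ?thesis by (simp add: not_integrable_integral)
qed

lemma bounded_bilinear_matrix_mult:
  "bounded_bilinear (\<lambda>(A::complex^'n^'m) (B::complex^'p^'n). A ** B)"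
proof -
  have "bilinear (\<lambda>(A::complex^'n^'m) (B::complex^'p^'n). A ** B)"
    unfolding bilinear_def
    by (auto intro!: linearI simp: matrix_add_ldistrib matrix_add_rdistrib
        scalar_matrix_assoc[symmetric] matrix_scalar_ac)
  then show ?thesis
    by (simp add: bilinear_conv_bounded_bilinear)
qed

lemma bounded_linear_mstar: "bounded_linear mstar"
  by (auto intro!: linearI simp: mstar_add mstar_scaleR linear_conv_bounded_linear[symmetric])

lemma has_vector_derivative_matrix_mult:
  fixes f :: "real \<Rightarrow> complex^'n^'m" and g :: "real \<Rightarrow> complex^'p^'n"
  assumes "(f has_vector_derivative f') (at t)" "(g has_vector_derivative g') (at t)"
  shows "((\<lambda>t. f t ** g t) has_vector_derivative (f t ** g' + f' ** g t)) (at t)"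
  using bounded_bilinear.has_vector_derivative[OF bounded_bilinear_matrix_mult assms] by simp

lemma has_vector_derivative_mstar:
  assumes "(f has_vector_derivative f') (at t)"
  shows "((\<lambda>t. mstar (f t)) has_vector_derivative mstar f') (at t)"
  using bounded_linear.has_vector_derivative[OF bounded_linear_mstar assms] .

lemma has_vector_derivative_cmat:
  assumes "(f has_vector_derivative f') (at t)"
  shows "((\<lambda>t. cmat (f t)) has_vector_derivative cmat f') (at t)"
proof -
  have "bounded_linear cmat"
    by (auto intro!: linearI simp: cmat_add cmat_scaleR linear_conv_bounded_linear[symmetric])
  from bounded_linear.has_vector_derivative[OF this assms] show ?thesis .
qed

lemma matpoly_twice_differentiable:
  assumes "matpoly P"
  obtains P' P'' where "\<And>t. (P has_vector_derivative P' t) (at t)"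
    and "\<And>t. (P' has_vector_derivative P'' t) (at t)"
proof -
  obtain c n where P: "P = (\<lambda>t. \<Sum>i\<le>n. t ^ i *\<^sub>R c i)"
    using assms unfolding matpoly_def by blast
  have sum_deriv:
    "((\<lambda>t. \<Sum>i\<le>n. f i t *\<^sub>R c i) has_vector_derivative (\<Sum>i\<le>n. f' i t *\<^sub>R c i)) (at t)"
    if "\<And>i t. (f i has_real_derivative f' i t) (at t)" for f f' :: "nat \<Rightarrow> real \<Rightarrow> real" and t
    by (intro has_vector_derivative_sum has_vector_derivative_scaleR[of _ _ _ _ _ 0, simplified] that)
      simp
  show ?thesis
  proof (rule that)
    show "(P has_vector_derivative (\<Sum>i\<le>n. (real i * t ^ (i - 1)) *\<^sub>R c i)) (at t)" for t
      unfolding P by (rule sum_deriv) (auto intro!: derivative_eq_intros)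
    show "((\<lambda>t. \<Sum>i\<le>n. (real i * t ^ (i - 1)) *\<^sub>R c i) has_vector_derivative
        (\<Sum>i\<le>n. (real i * (real (i - 1) * t ^ (i - 1 - 1))) *\<^sub>R c i)) (at t)" for t
      by (rule sum_deriv) (auto intro!: derivative_eq_intros)
  qed
qed

section \<open>Symmetry equations imply symmetry\<close>

lemma symmetry_identity:
  fixes P P' P'' Q Q' Q'' Wp Wp' F V S :: "complex^2^2" and s \<phi> \<psi> :: real
  assumes F_left: "F ** Wp = \<psi> *\<^sub>R Wp + \<phi> *\<^sub>R Wp' + \<phi> *\<^sub>R S"
    and F_right: "Wp ** mstar F = \<psi> *\<^sub>R Wp + \<phi> *\<^sub>R Wp' - \<phi> *\<^sub>R S"
    and V_commute: "V ** Wp = Wp ** V - \<psi> *\<^sub>R S"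
    and V_hermitian: "mstar V = V"
  shows "(s*\<phi>) *\<^sub>R (P'' ** Wp ** mstar Q + P' ** Wp' ** mstar Q - P ** Wp' ** mstar Q'
          - P ** Wp ** mstar Q'' + P' ** S ** mstar Q + P ** S ** mstar Q')
      + (s*\<psi>) *\<^sub>R (P' ** Wp ** mstar Q - P ** Wp ** mstar Q' + P ** S ** mstar Q)
    = (\<phi> *\<^sub>R P'' + P' ** F - P ** V) ** (s *\<^sub>R Wp) ** mstar Q
      - P ** (s *\<^sub>R Wp) ** mstar (\<phi> *\<^sub>R Q'' + Q' ** F - Q ** V)"
proof -
  have F_left': "F ** (Wp ** X) = \<psi> *\<^sub>R (Wp ** X) + \<phi> *\<^sub>R (Wp' ** X) + \<phi> *\<^sub>R (S ** X)"
    for X :: "complex^2^2"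
    by (simp add: matrix_mul_assoc F_left matrix_add_rdistrib scalar_matrix_assoc)
  have F_right': "Wp ** (mstar F ** X) = \<psi> *\<^sub>R (Wp ** X) + \<phi> *\<^sub>R (Wp' ** X) - \<phi> *\<^sub>R (S ** X)"
    for X :: "complex^2^2"
    by (simp add: matrix_mul_assoc F_right matrix_add_rdistrib matrix_diff_rdistrib
        scalar_matrix_assoc)
  have V_commute': "V ** (Wp ** X) = Wp ** (V ** X) - \<psi> *\<^sub>R (S ** X)"
    for X :: "complex^2^2"
    by (simp add: matrix_mul_assoc V_commute matrix_diff_rdistrib scalar_matrix_assoc)
  show ?thesis
    by (simp add: matrix_mul_assoc[symmetric] matrix_add_rdistrib matrix_add_ldistrib
        matrix_diff_rdistrib matrix_diff_ldistrib scalar_matrix_assoc[symmetric] matrix_scalar_ac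
        mstar_mult mstar_add mstar_diff mstar_scaleR F_left' F_right' V_commute' V_hermitian
        algebra_simps)
qed

lemma has_vector_derivative_boundary_form:
  fixes P Q Wp :: "real \<Rightarrow> complex^2^2" and S :: "complex^2^2"
  assumes P': "\<And>t. (P has_vector_derivative P' t) (at t)"
    and P'': "\<And>t. (P' has_vector_derivative P'' t) (at t)"
    and Q': "\<And>t. (Q has_vector_derivative Q' t) (at t)"
    and Q'': "\<And>t. (Q' has_vector_derivative Q'' t) (at t)"
    and Wp': "\<And>t. (Wp has_vector_derivative Wp' t) (at t)"
  shows "((\<lambda>t. P' t ** Wp t ** mstar (Q t) - P t ** Wp t ** mstar (Q' t) + P t ** S ** mstar (Q t))
    has_vector_derivative
      P'' t ** Wp t ** mstar (Q t) + P' t ** Wp' t ** mstar (Q t) - P t ** Wp' t ** mstar (Q' t)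
      - P t ** Wp t ** mstar (Q'' t) + P' t ** S ** mstar (Q t) + P t ** S ** mstar (Q' t)) (at t)"
  by (rule has_vector_derivative_eq_rhs,
      (rule has_vector_derivative_add has_vector_derivative_diff has_vector_derivative_matrix_mult
        has_vector_derivative_mstar has_vector_derivative_const P' P'' Q' Q'' Wp')+)
    (simp add: matrix_add_rdistrib algebra_simps)

lemma symmetric_op_if_symmetry_equations:
  fixes D :: "(real \<Rightarrow> complex^2^2) \<Rightarrow> real \<Rightarrow> complex^2^2"
    and W Wp Wp' F :: "real \<Rightarrow> complex^2^2" and V S :: "complex^2^2"
    and \<omega> \<psi> g :: "real \<Rightarrow> real"
  assumes D: "\<And>P P' P''. (\<And>t. (P has_vector_derivative P' t) (at t)) \<Longrightarrow>
      (\<And>t. (P' has_vector_derivative P'' t) (at t)) \<Longrightarrow>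
      D P = (\<lambda>t. (t * (1 - t)) *\<^sub>R P'' t + P' t ** F t - P t ** V)"
    and Wp_deriv: "\<And>t. (Wp has_vector_derivative Wp' t) (at t)"
    and W_eq: "\<And>t. t \<in> {0<..<1} \<Longrightarrow> W t = \<omega> t *\<^sub>R Wp t"
    and g_cont: "continuous_on {0..1} g" and g_0: "g 0 = 0" and g_1: "g 1 = 0"
    and g_eq: "\<And>t. t \<in> {0<..<1} \<Longrightarrow> g t = \<omega> t * (t * (1 - t))"
    and g_deriv: "\<And>t. t \<in> {0<..<1} \<Longrightarrow> (g has_real_derivative \<omega> t * \<psi> t) (at t)"
    and F_left: "\<And>t. t \<in> {0<..<1} \<Longrightarrow>
      F t ** Wp t = \<psi> t *\<^sub>R Wp t + (t * (1 - t)) *\<^sub>R Wp' t + (t * (1 - t)) *\<^sub>R S"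
    and F_right: "\<And>t. t \<in> {0<..<1} \<Longrightarrow>
      Wp t ** mstar (F t) = \<psi> t *\<^sub>R Wp t + (t * (1 - t)) *\<^sub>R Wp' t - (t * (1 - t)) *\<^sub>R S"
    and V_commute: "\<And>t. t \<in> {0<..<1} \<Longrightarrow> V ** Wp t = Wp t ** V - \<psi> t *\<^sub>R S"
    and V_hermitian: "mstar V = V"
  shows "symmetric_op D W"
  unfolding symmetric_op_def
proof (intro allI impI)
  fix P Q :: "real \<Rightarrow> complex^2^2"
  assume "matpoly P" "matpoly Q"
  then obtain P' P'' Q' Q'' where
    P': "\<And>t. (P has_vector_derivative P' t) (at t)" "\<And>t. (P' has_vector_derivative P'' t) (at t)"
    and Q': "\<And>t. (Q has_vector_derivative Q' t) (at t)" "\<And>t. (Q' has_vector_derivative Q'' t) (at t)"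
    by (metis matpoly_twice_differentiable)
  define K where "K t = P' t ** Wp t ** mstar (Q t) - P t ** Wp t ** mstar (Q' t)
    + P t ** S ** mstar (Q t)" for t
  define K' where "K' t = P'' t ** Wp t ** mstar (Q t) + P' t ** Wp' t ** mstar (Q t)
    - P t ** Wp' t ** mstar (Q' t) - P t ** Wp t ** mstar (Q'' t)
    + P' t ** S ** mstar (Q t) + P t ** S ** mstar (Q' t)" for t
  have K_deriv: "(K has_vector_derivative K' t) (at t)" for t
    unfolding K_def K'_def using P' Q' Wp_deriv by (rule has_vector_derivative_boundary_form)
  have "((\<lambda>t. g t *\<^sub>R K t) has_vector_derivative
      D P t ** W t ** mstar (Q t) - P t ** W t ** mstar (D Q t)) (at t)"
    if t: "t \<in> {0<..<1}" for t
  proof (rule has_vector_derivative_eq_rhs)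
    show "((\<lambda>t. g t *\<^sub>R K t) has_vector_derivative
        g t *\<^sub>R K' t + (\<omega> t * \<psi> t) *\<^sub>R K t) (at t)"
      by (intro has_vector_derivative_scaleR g_deriv K_deriv t)
    show "g t *\<^sub>R K' t + (\<omega> t * \<psi> t) *\<^sub>R K t
        = D P t ** W t ** mstar (Q t) - P t ** W t ** mstar (D Q t)"
      unfolding D[OF P'] D[OF Q'] W_eq[OF t] g_eq[OF t] K_def K'_def
      using symmetry_identity[OF F_left[OF t] F_right[OF t] V_commute[OF t] V_hermitian]
      by simp
  qed
  moreover have "continuous_on {0..1} K"
    using K_deriv
    by (intro continuous_at_imp_continuous_on ballI has_vector_derivative_continuous) blast
  then have "continuous_on {0..1} (\<lambda>t. g t *\<^sub>R K t)"
    using g_cont by (intro continuous_on_scaleR)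
  ultimately have "((\<lambda>t. D P t ** W t ** mstar (Q t) - P t ** W t ** mstar (D Q t)) has_integral
      g 1 *\<^sub>R K 1 - g 0 *\<^sub>R K 0) {0..1}"
    by (intro fundamental_theorem_of_calculus_interior) auto
  then have "((\<lambda>t. D P t ** W t ** mstar (Q t) - P t ** W t ** mstar (D Q t)) has_integral 0)
      {0<..<1}"
    by (simp add: g_0 g_1 has_integral_Icc_iff_Ioo)
  then show "mip W (D P) Q = mip W P (D Q)"
    unfolding mip_def by (rule integral_eq_if_has_integral_diff_0)
qed

section \<open>The weight W^(a,b,v) and the operator D\<close>

lemma Dk_eq:
  assumes "\<And>t. (P has_vector_derivative P' t) (at t)" "\<And>t. (P' has_vector_derivative P'' t) (at t)"
  shows "Dk \<alpha> \<beta> v k P = (\<lambda>t. (t * (1 - t)) *\<^sub>R P'' t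
    + P' t ** (mstar (cmat (Ck \<alpha> \<beta> v k)) - t *\<^sub>R cmat (Uk \<alpha> \<beta> k)) - P t ** cmat (Vmat v))"
proof -
  have "vector_derivative P (at s) = P' s" "vector_derivative P' (at s) = P'' s" for s
    using assms by (auto intro!: vector_derivative_at)
  then show ?thesis
    unfolding Dk_def Let_def by simp
qed

lemma Dk_shift: "Dk \<alpha> \<beta> v k = Dk (\<alpha> + real k) (\<beta> + real k) v 0"
proof -
  have "Ck \<alpha> \<beta> v k = Ck (\<alpha> + real k) (\<beta> + real k) v 0"
    by (simp add: matrix22_eq_iff Ck_def Cmat_def algebra_simps)
  moreover have "Uk \<alpha> \<beta> k = Uk (\<alpha> + real k) (\<beta> + real k) 0"
    by (simp add: Uk_def algebra_simps)
  ultimately show ?thesis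
    unfolding Dk_def by simp
qed

locale weight_parameters =
  fixes a b v :: real
  assumes a_gt: "a > -1" and b_gt: "b > -1"
    and v_gt: "\<bar>a - b\<bar> < \<bar>v\<bar>" and v_lt: "\<bar>v\<bar> < a + b + 2"
begin

definition "c1 = v * ((a + v + b) + 2) / (a + v - b)"
definition "c2 = - v * ((a - v + b) + 2) / (a - v - b)"

definition "W0 = mat2 (a + 1) (- (a + 1)) (- (a + 1)) (a + 1)"
definition "W1 = mat2 (- (a + v + b + 2)) (a + b + 2) (a + b + 2) (- (a - v + b + 2))"
definition "W2 = mat2 c1 0 0 c2"

definition Wpoly :: "real \<Rightarrow> real^2^2" where
  "Wpoly t = W0 + t *\<^sub>R W1 + t\<^sup>2 *\<^sub>R W2"

definition \<omega> :: "real \<Rightarrow> real" where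
  "\<omega> t = t powr a * (1 - t) powr b"

lemma Wpoly_eq_mat2:
  "Wpoly t = mat2 (c1 * t\<^sup>2 - (a + v + b + 2) * t + (a + 1)) ((a + b + 2) * t - (a + 1))
     ((a + b + 2) * t - (a + 1)) (c2 * t\<^sup>2 - (a - v + b + 2) * t + (a + 1))"
  by (simp add: matrix22_eq_iff Wpoly_def W0_def W1_def W2_def algebra_simps)

lemma Wabv_eq: "Wabv a b v t = cmat (\<omega> t *\<^sub>R Wpoly t)"
  by (simp add: Wabv_def Wpoly_eq_mat2 \<omega>_def c1_def c2_def)

lemma v_nonzero: "v \<noteq> 0" and a_v_b_nonzero: "a + v - b \<noteq> 0" "a - v - b \<noteq> 0"
  using v_gt by auto

lemma sign_cases:
  obtains "v > 0" "a - b < v" "b - a < v" "v < a + b + 2"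
    | "v < 0" "a - b < - v" "b - a < - v" "- v < a + b + 2"
  using v_gt v_lt by (cases "v > 0") auto

lemmas sign_iffs = zero_less_divide_iff divide_less_0_iff zero_less_mult_iff mult_less_0_iff

lemma c1_pos: "c1 > 0"
  unfolding c1_def by (cases rule: sign_cases) (auto simp: sign_iffs)

lemma c2_pos: "c2 > 0"
  unfolding c2_def by (cases rule: sign_cases) (auto simp: sign_iffs)

lemma Wpoly_11_pos: "Wpoly t $ 1 $ 1 > 0"
proof -
  have "4 * c1 * (a + 1) - (a + v + b + 2)\<^sup>2
      = (a + b + 2 + v) * (a + b + 2 - v) * (v - (a - b)) / (a + v - b)"
    unfolding c1_def using a_v_b_nonzero
    by (simp add: field_simps) (simp add: algebra_simps power2_eq_square)
  also have "\<dots> > 0"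
    by (cases rule: sign_cases) (auto simp: sign_iffs)
  finally have discr: "4 * c1 * (a + 1) - (a + v + b + 2)\<^sup>2 > 0" .
  have "4 * c1 * Wpoly t $ 1 $ 1
      = (2 * c1 * t - (a + v + b + 2))\<^sup>2 + (4 * c1 * (a + 1) - (a + v + b + 2)\<^sup>2)"
    by (simp add: Wpoly_eq_mat2 algebra_simps power2_eq_square)
  also have "\<dots> > 0"
    using discr by (simp add: add_nonneg_pos)
  finally show ?thesis
    using c1_pos by (simp add: zero_less_mult_iff)
qed

lemma det_Wpoly:
  "Wpoly t $ 1 $ 1 * Wpoly t $ 2 $ 2 - (Wpoly t $ 1 $ 2)\<^sup>2 = c1 * c2 * (t * (1 - t))\<^sup>2"
proof -
  have "(a + v - b) * (a - v - b) \<noteq> 0"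
    using a_v_b_nonzero by simp
  then have "a * a + b * b - (v * v + a * (b * 2)) \<noteq> 0"
    by (simp add: algebra_simps)
  then show ?thesis
    using a_v_b_nonzero unfolding Wpoly_eq_mat2 c1_def c2_def
    by (simp add: field_simps) (simp add: algebra_simps power2_eq_square eval_nat_numeral)
qed

lemma pos_def_Wabv:
  assumes "t \<in> {0<..<1}"
  shows "pos_def (Wabv a b v t)"
  unfolding Wabv_eq
proof (rule pos_def_cmat)
  let ?R = "\<omega> t *\<^sub>R Wpoly t"
  have \<omega>: "\<omega> t > 0"
    using assms by (simp add: \<omega>_def)
  show "?R $ 1 $ 2 = ?R $ 2 $ 1"
    by (simp add: Wpoly_eq_mat2)
  show "?R $ 1 $ 1 > 0"
    using \<omega> Wpoly_11_pos by simp
  have "c1 * c2 * (t * (1 - t))\<^sup>2 > 0"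
    using assms c1_pos c2_pos by simp
  then show "?R $ 1 $ 1 * ?R $ 2 $ 2 - (?R $ 1 $ 2)\<^sup>2 > 0"
    using \<omega> det_Wpoly[of t] by (simp add: power2_eq_square algebra_simps)
qed

lemma weight_matrix_Wabv: "weight_matrix (Wabv a b v)"
  unfolding weight_matrix_def
proof (intro conjI allI)
  show "AE t in lebesgue. t \<in> {0<..<1} \<longrightarrow> pos_def (Wabv a b v t)"
    using pos_def_Wabv by auto
  fix n :: nat
  have "t ^ n *\<^sub>R Wabv a b v t = (t ^ n * \<omega> t) *\<^sub>R cmat W0 + (t ^ (n + 1) * \<omega> t) *\<^sub>R cmat W1
      + (t ^ (n + 2) * \<omega> t) *\<^sub>R cmat W2" for t
    by (simp add: Wabv_eq Wpoly_def cmat_add cmat_scaleR algebra_simps power_add power2_eq_square)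
  then show "(\<lambda>t. t ^ n *\<^sub>R Wabv a b v t) absolutely_integrable_on {0<..<1}"
    unfolding \<omega>_def
    by (simp only:) (intro set_integral_add absolutely_integrable_scaleR_right
        beta_moment_absolutely_integrable a_gt b_gt)
qed

lemma det_eq_0_if_offdiag_W0_W1_eq_0:
  assumes "(M ** cmat W0 ** mstar M) $ 1 $ 2 = 0" and "(M ** cmat W1 ** mstar M) $ 1 $ 2 = 0"
  shows "det M = 0"
proof -
  have "of_real (a + 1) * ((M$1$1 - M$1$2) * (cnj (M$2$1) - cnj (M$2$2))) = 0"
    using assms(1) by (simp add: W0_def algebra_simps)
  then have "M$1$1 = M$1$2 \<or> cnj (M$2$1) = cnj (M$2$2)"
    using a_gt by (auto simp del: of_real_add)
  then show ?thesis
  proof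
    assume e: "M$1$1 = M$1$2"
    have "M$1$1 * of_real v * (cnj (M$2$2) - cnj (M$2$1)) = 0"
      using assms(2) e by (simp add: W1_def algebra_simps)
    then show ?thesis
      using e v_nonzero by (auto simp: det_2 complex_cnj_cancel_iff)
  next
    assume e: "cnj (M$2$1) = cnj (M$2$2)"
    have "cnj (M$2$1) * of_real v * (M$1$2 - M$1$1) = 0"
      using assms(2) e by (simp add: W1_def algebra_simps)
    then show ?thesis
      using e v_nonzero by (auto simp: det_2 complex_cnj_cancel_iff)
  qed
qed

lemma irreducible_Wabv: "irreducible_weight (Wabv a b v)"
  unfolding irreducible_weight_def
proof
  assume "\<exists>M. invertible M \<and> (\<forall>t\<in>{0<..<1}. is_diag (M ** Wabv a b v t ** mstar M))"
  then obtain M where M: "invertible M"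
    and diag: "\<And>t. t \<in> {0<..<1} \<Longrightarrow> is_diag (M ** Wabv a b v t ** mstar M)"
    by blast
  define f where "f X = (M ** cmat X ** mstar M) $ 1 $ 2" for X
  have f_add: "f (A + B) = f A + f B" for A B
    by (simp add: f_def cmat_add matrix_add_ldistrib matrix_add_rdistrib)
  have f_scaleR: "f (c *\<^sub>R A) = of_real c * f A" for c A
    by (simp only: f_def cmat_scaleR matrix_scalar_ac scalar_matrix_assoc[symmetric]
        vector_scaleR_component) (simp add: scaleR_conv_of_real)
  have "f W0 + of_real t * f W1 + of_real (t\<^sup>2) * f W2 = 0" if t: "0 < t" "t < 1" for t
  proof -
    have "of_real (\<omega> t) * (f W0 + of_real t * f W1 + of_real (t\<^sup>2) * f W2) = f (\<omega> t *\<^sub>R Wpoly t)"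
      by (simp only: Wpoly_def f_add f_scaleR)
    also have "\<dots> = 0"
      using diag[of t] t unfolding f_def Wabv_eq by (simp add: is_diag_def)
    finally show ?thesis
      using t by (simp add: \<omega>_def)
  qed
  then have "f W0 = 0" and "f W1 = 0"
    using quadratic_eq_0_on_unit_interval by blast+
  then have "det M = 0"
    unfolding f_def by (rule det_eq_0_if_offdiag_W0_W1_eq_0)
  with M show False
    by (simp add: invertible_det_nz)
qed

definition \<psi> :: "real \<Rightarrow> real" where
  "\<psi> t = (a + 1) * (1 - t) - (b + 1) * t"

definition F :: "real \<Rightarrow> real^2^2" where
  "F t = transpose (Cmat a b v) - (t * (a + b + 4)) *\<^sub>R mat 1"

definition "Wpoly' t = W1 + (2 * t) *\<^sub>R W2"

definition "S = mat2 0 v (- v) 0"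

lemma Wpoly_has_derivative: "((\<lambda>t. cmat (Wpoly t)) has_vector_derivative cmat (Wpoly' t)) (at t)"
  unfolding Wpoly_def Wpoly'_def
  by (rule has_vector_derivative_cmat, rule has_vector_derivative_eq_rhs,
      (rule has_vector_derivative_add has_vector_derivative_const has_vector_derivative_scaleR
        derivative_intros)+) simp

lemma symmetry_equations:
  "F t ** Wpoly t = \<psi> t *\<^sub>R Wpoly t + (t * (1 - t)) *\<^sub>R Wpoly' t + (t * (1 - t)) *\<^sub>R S"
  "Wpoly t ** transpose (F t)
    = \<psi> t *\<^sub>R Wpoly t + (t * (1 - t)) *\<^sub>R Wpoly' t - (t * (1 - t)) *\<^sub>R S"
  "Vmat v ** Wpoly t = Wpoly t ** Vmat v - \<psi> t *\<^sub>R S"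
proof -
  \<comment> \<open>Naming the quotients and recording their defining relations makes every entry an
    ideal-membership problem for polynomials, which \<open>algebra\<close> decides.\<close>
  define e1 e2 where "e1 = (a - v - b) / v" and "e2 = (a + v - b) / v"
  have rels: "c1 * (a + v - b) = v * (a + v + b + 2)" "c2 * (a - v - b) = - v * (a - v + b + 2)"
    "e1 * v = a - v - b" "e2 * v = a + v - b"
    using v_nonzero a_v_b_nonzero by (simp_all add: c1_def c2_def e1_def e2_def)
  have C: "Cmat a b v = mat2 (a + 1 - e1) e2 (- e1) (a + 1 + e2)"
    unfolding Cmat_def e1_def e2_def by (simp only: minus_divide_left)
  show "F t ** Wpoly t = \<psi> t *\<^sub>R Wpoly t + (t * (1 - t)) *\<^sub>R Wpoly' t + (t * (1 - t)) *\<^sub>R S"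
    by (simp add: matrix22_eq_iff F_def \<psi>_def Wpoly'_def S_def C Wpoly_eq_mat2 W1_def W2_def
        transpose_def) (use rels v_nonzero a_v_b_nonzero in algebra)
  show "Wpoly t ** transpose (F t)
    = \<psi> t *\<^sub>R Wpoly t + (t * (1 - t)) *\<^sub>R Wpoly' t - (t * (1 - t)) *\<^sub>R S"
    by (simp add: matrix22_eq_iff F_def \<psi>_def Wpoly'_def S_def C Wpoly_eq_mat2 W1_def W2_def
        transpose_def) (use rels v_nonzero a_v_b_nonzero in algebra)
  show "Vmat v ** Wpoly t = Wpoly t ** Vmat v - \<psi> t *\<^sub>R S"
    by (simp add: matrix22_eq_iff Vmat_def \<psi>_def S_def Wpoly_eq_mat2 algebra_simps)
qed

definition boundary_weight :: "real \<Rightarrow> real" where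
  "boundary_weight t = t powr (a + 1) * (1 - t) powr (b + 1)"

lemma boundary_weight_has_derivative:
  assumes "t \<in> {0<..<1}"
  shows "(boundary_weight has_real_derivative \<omega> t * \<psi> t) (at t)"
proof (rule DERIV_cong)
  show "(boundary_weight has_real_derivative (a + 1) * t powr (a + 1 - 1) * (1 - t) powr (b + 1)
      - t powr (a + 1) * ((b + 1) * (1 - t) powr (b + 1 - 1))) (at t)"
    unfolding boundary_weight_def using assms by (auto intro!: derivative_eq_intros)
  show "(a + 1) * t powr (a + 1 - 1) * (1 - t) powr (b + 1)
      - t powr (a + 1) * ((b + 1) * (1 - t) powr (b + 1 - 1)) = \<omega> t * \<psi> t"
    using assms by (simp add: \<omega>_def \<psi>_def powr_add algebra_simps)
qed

lemma continuous_on_boundary_weight: "continuous_on {0..1} boundary_weight"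
  unfolding boundary_weight_def using a_gt b_gt by (intro continuous_intros continuous_on_powr') auto

lemma symmetric_op_Dk0: "symmetric_op (Dk a b v 0) (Wabv a b v)"
proof (rule symmetric_op_if_symmetry_equations[where Wp = "\<lambda>t. cmat (Wpoly t)"
      and F = "\<lambda>t. cmat (F t)" and S = "cmat S" and \<omega> = \<omega> and \<psi> = \<psi> and g = boundary_weight])
  have "cmat (F t) = mstar (cmat (Ck a b v 0)) - t *\<^sub>R cmat (Uk a b 0)" for t
    by (simp add: F_def Ck_def Uk_def mstar_cmat cmat_diff cmat_scaleR)
  then show "Dk a b v 0 P
      = (\<lambda>t. (t * (1 - t)) *\<^sub>R P'' t + P' t ** cmat (F t) - P t ** cmat (Vmat v))"
    if "\<And>t. (P has_vector_derivative P' t) (at t)" "\<And>t. (P' has_vector_derivative P'' t) (at t)"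
    for P P' P''
    by (simp add: Dk_eq[OF that])
  show "Wabv a b v t = \<omega> t *\<^sub>R cmat (Wpoly t)" for t
    by (simp add: Wabv_eq cmat_scaleR)
  show "boundary_weight 0 = 0" "boundary_weight 1 = 0"
    by (simp_all add: boundary_weight_def)
  show "boundary_weight t = \<omega> t * (t * (1 - t))" if "t \<in> {0<..<1}" for t
    using that by (simp add: boundary_weight_def \<omega>_def powr_add)
  show "cmat (F t) ** cmat (Wpoly t) = \<psi> t *\<^sub>R cmat (Wpoly t)
      + (t * (1 - t)) *\<^sub>R cmat (Wpoly' t) + (t * (1 - t)) *\<^sub>R cmat S" for t
    by (simp only: cmat_mult[symmetric] symmetry_equations cmat_add cmat_scaleR)
  show "cmat (Wpoly t) ** mstar (cmat (F t)) = \<psi> t *\<^sub>R cmat (Wpoly t)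
      + (t * (1 - t)) *\<^sub>R cmat (Wpoly' t) - (t * (1 - t)) *\<^sub>R cmat S" for t
    by (simp only: mstar_cmat cmat_mult[symmetric] symmetry_equations cmat_add cmat_diff
        cmat_scaleR)
  show "cmat (Vmat v) ** cmat (Wpoly t) = cmat (Wpoly t) ** cmat (Vmat v) - \<psi> t *\<^sub>R cmat S"
    for t
    by (simp only: cmat_mult[symmetric] symmetry_equations cmat_diff cmat_scaleR)
  show "mstar (cmat (Vmat v)) = cmat (Vmat v)"
    by (simp add: matrix22_eq_iff Vmat_def)
qed (use Wpoly_has_derivative continuous_on_boundary_weight boundary_weight_has_derivative
    in auto)

end

theorem proposition5p2:
  fixes k :: nat and \<alpha> \<beta> v :: real
  assumes "\<alpha> > - (real k + 1)" and "\<beta> > - (real k + 1)"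
    and "\<bar>\<alpha> - \<beta>\<bar> < \<bar>v\<bar>" and "\<bar>v\<bar> < \<alpha> + \<beta> + 2 * (real k + 1)"
  shows "weight_matrix (Wk \<alpha> \<beta> v k) \<and> irreducible_weight (Wk \<alpha> \<beta> v k)
         \<and> symmetric_op (Dk \<alpha> \<beta> v k) (Wk \<alpha> \<beta> v k)"
proof -
  interpret weight_parameters "\<alpha> + real k" "\<beta> + real k" v
    using assms by unfold_locales auto
  have "Wk \<alpha> \<beta> v k = Wabv (\<alpha> + real k) (\<beta> + real k) v"
    by (simp add: Wk_def fun_eq_iff)
  moreover have "Dk \<alpha> \<beta> v k = Dk (\<alpha> + real k) (\<beta> + real k) v 0"
    by (rule Dk_shift)
  ultimately show ?thesis
    using weight_matrix_Wabv irreducible_Wabv symmetric_op_Dk0 by simp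
qed

end
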